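(* Let $K$ be a nonempty simplex in a topological vector space $F$ and let $T:K\to 2^{K}$ be a *-weakly naturally quasiconvex correspondence. Then there exists $x^*\in K$ such that $x^*\in\overline{T}(x^* )$.
   Context: A simplex is the convex hull of a finite affinely independent set. For $T:X\to 2^Y$: $\mathrm{Gr}(T)=\{(x,y):y\in T(x)\}$; $\overline{T}(x)=\{y\in Y:(x,y)\in\mathrm{cl}_{X\times Y}\mathrm{Gr}(T)\}$; for $V\subset F$, $T_V(x)=(T(x)+V)\cap Y$. $\Delta_{n-1}=\{(\lambda_1,\dots,\lambda_n)\in\mathbb{R}^n:\sum_i\lambda_i=1,\ \lambda_i\ge 0\}$. Weakly naturally quasiconvex (WNQ): let $X,Y$ be nonempty convex subsets of topological vector spaces. A correspondence $T:X\to 2^{Y}$ is weakly naturally quasiconvex if for each $n\in\mathbb{N}$ and each finite set $\{x_1,\dots,x_n\}\subset X$ there exist $y_i\in T(x_i)$ ($i=1,\dots,n$) and a bijection $g:\Delta_{n-1}\to\Delta_{n-1}$ (depending on $x_1,\dots,x_n$) of the form $g(\lambda_1,\dots,\lambda_n)=(g_1(\lambda_1),\dots,g_n(\lambda_n))$, where each $g_i:[0,1]\to[0,1]$ is continuous with $g_i(0)=0$ and $g_i(1)=1$, such that for every $(\lambda_1,\dots,\lambda_n)\in\Delta_{n-1}$ we have $\sum_{i=1}^n g_i(\lambda_i)y_i\in T\big(\sum_{i=1}^n\lambda_i x_i\big)$. *-weakly naturally quasiconvex: $T:X\to 2^Y$, $Y\subset F$, is *-weakly naturally quasiconvex if for each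 neighborhood $V$ of the origin in $F$ the correspondence $T_V$ is weakly naturally quasiconvex. *)

theory Defs
  imports "HOL-Analysis.Analysis"
begin

definition tvs :: "'a::{real_vector,topological_space} itself \<Rightarrow> bool" where
  "tvs _ \<longleftrightarrow>
     continuous_on UNIV (\<lambda>p::'a \<times> 'a. fst p + snd p) \<and>
     continuous_on UNIV (\<lambda>p::real \<times> 'a. fst p *\<^sub>R snd p)"

definition is_simplex :: "'a::real_vector set \<Rightarrow> bool" where
  "is_simplex K \<longleftrightarrow> (\<exists>S. finite S \<and> \<not> affine_dependent S \<and> K = convex hull S)"

definition corr_graph :: "('a \<Rightarrow> 'b set) \<Rightarrow> ('a \<times> 'b) set" where
  "corr_graph T = {(x, y). y \<in> T x}"

text \<open>\<open>closure_corr X Y T x\<close> is \<open>\<overline>T(x)\<close>: the closure of the corr_graph is taken in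
\<open>X \<times> Y\<close> with its subspace (product) topology.\<close>
definition closure_corr :: "'a::topological_space set \<Rightarrow> 'b::topological_space set
    \<Rightarrow> ('a \<Rightarrow> 'b set) \<Rightarrow> 'a \<Rightarrow> 'b set" where
  "closure_corr X Y T x = {y \<in> Y. (x, y) \<in> X \<times> Y \<and> (x, y) \<in> closure (corr_graph T \<inter> (X \<times> Y))}"

definition corr_V :: "'b::real_vector set \<Rightarrow> ('a \<Rightarrow> 'b set) \<Rightarrow> 'b set \<Rightarrow> 'a \<Rightarrow> 'b set" where
  "corr_V Y T V x = {y + v | y v. y \<in> T x \<and> v \<in> V} \<inter> Y"

definition std_simplex :: "nat \<Rightarrow> (nat \<Rightarrow> real) set" where
  "std_simplex n = {l. (\<forall>i<n. 0 \<le> l i) \<and> (\<forall>i\<ge>n. l i = 0) \<and> (\<Sum>i<n. l i) = 1}"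

definition wnq :: "'a::real_vector set \<Rightarrow> 'b::real_vector set \<Rightarrow> ('a \<Rightarrow> 'b set) \<Rightarrow> bool" where
  "wnq X Y T \<longleftrightarrow>
     (\<forall>n::nat. \<forall>x::nat \<Rightarrow> 'a. n \<ge> 1 \<and> inj_on x {..<n} \<and> (\<forall>i<n. x i \<in> X) \<longrightarrow>
        (\<exists>(y::nat \<Rightarrow> 'b) (g::nat \<Rightarrow> real \<Rightarrow> real).
           (\<forall>i<n. y i \<in> T (x i)) \<and>
           (\<forall>i<n. continuous_on {0..1} (g i) \<and> g i 0 = 0 \<and> g i 1 = 1 \<and> g i ` {0..1} \<subseteq> {0..1}) \<and>
           bij_betw (\<lambda>l. \<lambda>i. if i < n then g i (l i) else 0) (std_simplex n) (std_simplex n) \<and>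
           (\<forall>l\<in>std_simplex n. (\<Sum>i<n. g i (l i) *\<^sub>R y i) \<in> T (\<Sum>i<n. l i *\<^sub>R x i))))"

definition star_wnq :: "'a::real_vector set \<Rightarrow> 'b::{real_vector,topological_space} set
    \<Rightarrow> ('a \<Rightarrow> 'b set) \<Rightarrow> bool" where
  "star_wnq X Y T \<longleftrightarrow>
     (\<forall>V. (\<exists>U. open U \<and> (0::'b) \<in> U \<and> U \<subseteq> V) \<longrightarrow> wnq X Y (corr_V Y T V))"

end

theory Submission
  imports Defs "HOL-Homology.Brouwer_Degree"
begin

text \<open>
  The proof has three ingredients.
  \<^item> Brouwer's fixed point theorem for the standard simplex \<open>\<Delta>\<^sub>n\<^sub>-\<^sub>1 \<subseteq> (nat \<Rightarrow> real)\<close>.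
    Since the dimension varies, it is derived from the non-contractibility of the
    sphere \<open>nsphere p\<close> (HOL-Homology) for the coordinate unit ball, and transferred to
    the simplex, a retract of the ball.
  \<^item> A fixed point theorem for weakly naturally quasiconvex self-correspondences \<open>U\<close> of a
    simplex \<open>K\<close> with vertices \<open>x\<^sub>i\<close>: expressing the points \<open>y\<^sub>i \<in> U(x\<^sub>i)\<close> of the definition
    in barycentric coordinates turns \<open>l \<mapsto> \<Sum> g\<^sub>i(l\<^sub>i) y\<^sub>i\<close> into a continuous self-map of
    \<open>\<Delta>\<^sub>n\<^sub>-\<^sub>1\<close>, whose Brouwer fixed point gives \<open>z \<in> U z\<close>.
  \<^item> A compactness argument in the topological vector space: applied to \<open>U = T\<^sub>V\<close> this
    gives, for every neighbourhood \<open>V\<close> of the origin, a point \<open>z \<in> T z + V\<close>; as the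
    simplex is compact, some \<open>(x, x)\<close> lies in the closure of the graph of \<open>T\<close>.
\<close>

definition coord_sqnorm :: "nat \<Rightarrow> (nat \<Rightarrow> real) \<Rightarrow> real" where
  "coord_sqnorm p w = (\<Sum>i\<le>p. (w i)\<^sup>2)"

definition coord_ball :: "nat \<Rightarrow> (nat \<Rightarrow> real) set" where
  "coord_ball p = {x. coord_sqnorm p x \<le> 1 \<and> (\<forall>i>p. x i = 0)}"

definition coord_sphere :: "nat \<Rightarrow> (nat \<Rightarrow> real) set" where
  "coord_sphere p = {x. coord_sqnorm p x = 1 \<and> (\<forall>i>p. x i = 0)}"

definition coord_normalize :: "nat \<Rightarrow> (nat \<Rightarrow> real) \<Rightarrow> (nat \<Rightarrow> real)" where
  "coord_normalize p w = (\<lambda>i. w i / sqrt (coord_sqnorm p w))"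

lemma nsphere_eq_coord_sphere: "nsphere p = top_of_set (coord_sphere p)"
  by (simp add: nsphere coord_sphere_def coord_sqnorm_def euclidean_product_topology)

lemma coord_sqnorm_nonneg: "0 \<le> coord_sqnorm p w"
  by (simp add: coord_sqnorm_def sum_nonneg)

lemma coord_sqnorm_scale: "coord_sqnorm p (\<lambda>i. c * w i) = c\<^sup>2 * coord_sqnorm p w"
  by (simp add: coord_sqnorm_def power_mult_distrib sum_distrib_left)

lemma coord_sqnorm_eq_0:
  assumes "coord_sqnorm p w = 0" "j \<le> p" shows "w j = 0"
proof -
  have "\<forall>i\<in>{..p}. (w i)\<^sup>2 = 0"
    using assms(1) unfolding coord_sqnorm_def by (subst sum_nonneg_eq_0_iff[symmetric]) auto
  then show ?thesis using assms(2) by auto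
qed

lemma coord_normalize_in_sphere:
  assumes "coord_sqnorm p w \<noteq> 0" "\<forall>i>p. w i = 0"
  shows "coord_normalize p w \<in> coord_sphere p"
proof -
  have "coord_sqnorm p (coord_normalize p w) = coord_sqnorm p w / coord_sqnorm p w"
    using coord_sqnorm_nonneg[of p w]
    by (simp add: coord_sqnorm_def coord_normalize_def power_divide sum_divide_distrib[symmetric])
  then show ?thesis using assms by (simp add: coord_sphere_def coord_normalize_def)
qed

lemma coord_normalize_sphere: "x \<in> coord_sphere p \<Longrightarrow> coord_normalize p x = x"
  by (simp add: coord_sphere_def coord_normalize_def)

lemma continuous_on_coord_normalize:
  fixes h :: "'a::topological_space \<Rightarrow> nat \<Rightarrow> real"
  assumes "\<And>i. continuous_on A (\<lambda>z. h z i)" "\<And>z. z \<in> A \<Longrightarrow> coord_sqnorm p (h z) \<noteq> 0"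
  shows "continuous_on A (\<lambda>z. coord_normalize p (h z))"
  unfolding coord_normalize_def coord_sqnorm_def
  using assms(2)[unfolded coord_sqnorm_def] coord_sqnorm_nonneg[unfolded coord_sqnorm_def]
  by (intro continuous_on_coordinatewise_then_product continuous_intros assms) auto

lemma coord_eqI:
  fixes x y :: "nat \<Rightarrow> real"
  assumes "\<And>j. j \<le> p \<Longrightarrow> x j = y j" "\<And>j. p < j \<Longrightarrow> x j = y j" shows "x = y"
proof
  fix j show "x j = y j" using assms(1)[of j] assms(2)[of j] by (metis not_le)
qed

lemma normalized_homotopy:
  fixes H :: "real \<Rightarrow> (nat \<Rightarrow> real) \<Rightarrow> nat \<Rightarrow> real"
  assumes cont: "\<And>i. continuous_on ({0..1} \<times> coord_sphere p) (\<lambda>z. H (fst z) (snd z) i)"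
    and nonzero: "\<And>t x. t \<in> {0..1} \<Longrightarrow> x \<in> coord_sphere p \<Longrightarrow> coord_sqnorm p (H t x) \<noteq> 0"
    and support: "\<And>t x i. t \<in> {0..1} \<Longrightarrow> x \<in> coord_sphere p \<Longrightarrow> p < i \<Longrightarrow> H t x i = 0"
  shows "homotopic_with (\<lambda>_. True) (nsphere p) (nsphere p)
           (\<lambda>x. coord_normalize p (H 0 x)) (\<lambda>x. coord_normalize p (H 1 x))"
proof -
  let ?h = "\<lambda>z. coord_normalize p (H (fst z) (snd z))"
  have "continuous_on ({0..1} \<times> coord_sphere p) ?h"
    by (rule continuous_on_coord_normalize[OF cont]) (simp add: nonzero mem_Times_iff)
  moreover have "?h z \<in> coord_sphere p" if "z \<in> {0..1} \<times> coord_sphere p" for z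
    using that nonzero support by (intro coord_normalize_in_sphere) (auto simp: mem_Times_iff)
  ultimately have "continuous_map (prod_topology (top_of_set {0..1}) (nsphere p)) (nsphere p) ?h"
    by (simp add: nsphere_eq_coord_sphere Pi_iff)
  then show ?thesis
    unfolding homotopic_with_def by (intro exI[of _ ?h]) auto
qed

lemma coord_sphere_subset_ball: "coord_sphere p \<subseteq> coord_ball p"
  by (auto simp: coord_sphere_def coord_ball_def)

lemma continuous_on_coordinate_compose:
  fixes f :: "'a::topological_space \<Rightarrow> nat \<Rightarrow> real"
  assumes "continuous_on B f" "continuous_on A h" "h ` A \<subseteq> B"
  shows "continuous_on A (\<lambda>z. f (h z) i)"
proof -
  have "continuous_on A (\<lambda>z. f (h z))" by (rule continuous_on_compose2[OF assms])
  then show ?thesis by (rule continuous_on_compose2[OF continuous_on_product_coordinates]) auto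
qed

lemma coord_eq_if_sqnorm_diff_0:
  assumes "coord_sqnorm p (\<lambda>i. x i - y i) = 0" "\<forall>i>p. x i = 0" "\<forall>i>p. y i = 0"
  shows "x = y"
  using assms coord_sqnorm_eq_0[OF assms(1)] by (intro coord_eqI[of p]) auto

lemma sphere_scaled_ball_point:
  assumes x: "x \<in> coord_sphere p" and y: "y \<in> coord_ball p" and t: "t \<in> {0..1}"
    and x_eq: "\<And>j. j \<le> p \<Longrightarrow> x j = t * y j"
  shows "x = y"
proof -
  have "1 = coord_sqnorm p x" using x by (simp add: coord_sphere_def)
  also have "\<dots> = t\<^sup>2 * coord_sqnorm p y"
    using coord_sqnorm_scale[of p t y] x_eq by (simp add: coord_sqnorm_def)
  finally have one: "t\<^sup>2 * coord_sqnorm p y = 1" ..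
  have "coord_sqnorm p y \<le> 1" using y by (simp add: coord_ball_def)
  moreover have "t\<^sup>2 \<le> 1" using t by (simp add: power_le_one)
  ultimately have "t\<^sup>2 = 1"
    using one mult_left_le[of "coord_sqnorm p y" "t\<^sup>2"] by force
  then have "t = 1" using t by (simp add: power2_eq_1_iff)
  then show ?thesis
    using x_eq x y by (intro coord_eqI[of p]) (auto simp: coord_ball_def coord_sphere_def)
qed

text \<open>For a fixed-point-free self-map \<open>f\<close> of the ball, \<open>x \<mapsto> (x - f x)/|x - f x|\<close> is
  homotopic on the sphere to the identity, via \<open>x - t f x\<close>.\<close>
lemma fixpoint_free_homotopic_id:
  assumes cf: "continuous_on (coord_ball p) f"
    and f_ball: "\<And>x. x \<in> coord_ball p \<Longrightarrow> f x \<in> coord_ball p"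
    and no_fixpoint: "\<And>x. x \<in> coord_ball p \<Longrightarrow> f x \<noteq> x"
  shows "homotopic_with (\<lambda>_. True) (nsphere p) (nsphere p)
           id (\<lambda>x. coord_normalize p (\<lambda>i. x i - f x i))"
proof -
  have "homotopic_with (\<lambda>_. True) (nsphere p) (nsphere p)
          (\<lambda>x. coord_normalize p (\<lambda>i. x i - 0 * f x i)) (\<lambda>x. coord_normalize p (\<lambda>i. x i - 1 * f x i))"
  proof (rule normalized_homotopy)
    fix i
    have "continuous_on ({0..1} \<times> coord_sphere p) (\<lambda>z. f (snd z) i)"
      using coord_sphere_subset_ball
      by (intro continuous_on_coordinate_compose[OF cf] continuous_on_snd continuous_on_id) auto
    then show "continuous_on ({0..1} \<times> coord_sphere p) (\<lambda>z. snd z i - fst z * f (snd z) i)"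
      by (intro continuous_intros continuous_on_compose2[OF continuous_on_product_coordinates
            continuous_on_snd]) auto
  next
    fix t :: real and x assume t: "t \<in> {0..1}" and x: "x \<in> coord_sphere p"
    then have xB: "x \<in> coord_ball p" using coord_sphere_subset_ball by auto
    show "coord_sqnorm p (\<lambda>i. x i - t * f x i) \<noteq> 0"
    proof
      assume "coord_sqnorm p (\<lambda>i. x i - t * f x i) = 0"
      then have "x j = t * f x j" if "j \<le> p" for j
        using coord_sqnorm_eq_0[OF _ that] by fastforce
      then have "x = f x" using sphere_scaled_ball_point[OF x f_ball[OF xB] t] by blast
      then show False using no_fixpoint[OF xB] by simp
    qed
  qed (use f_ball coord_sphere_subset_ball in \<open>auto simp: coord_sphere_def coord_ball_def\<close>)
  moreover have "homotopic_with (\<lambda>_. True) (nsphere p) (nsphere p)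
                   id (\<lambda>x. coord_normalize p (\<lambda>i. x i - 0 * f x i))"
    by (rule homotopic_with_equal) (auto simp: nsphere_eq_coord_sphere coord_normalize_sphere)
  ultimately show ?thesis using homotopic_with_trans by fastforce
qed

text \<open>\<dots> and to a constant map, via \<open>(1-t)x - f((1-t)x)\<close>.\<close>
lemma fixpoint_free_homotopic_const:
  assumes cf: "continuous_on (coord_ball p) f"
    and f_ball: "\<And>x. x \<in> coord_ball p \<Longrightarrow> f x \<in> coord_ball p"
    and no_fixpoint: "\<And>x. x \<in> coord_ball p \<Longrightarrow> f x \<noteq> x"
  shows "homotopic_with (\<lambda>_. True) (nsphere p) (nsphere p)
           (\<lambda>x. coord_normalize p (\<lambda>i. x i - f x i)) (\<lambda>x. coord_normalize p (\<lambda>i. 0 - f (\<lambda>j. 0) i))"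
proof -
  define m where "m = (\<lambda>t (x::nat \<Rightarrow> real) j. (1 - t) * x j)"
  have m_ball: "m t x \<in> coord_ball p" if t: "t \<in> {0..1}" and x: "x \<in> coord_sphere p" for t x
  proof -
    have "coord_sqnorm p (m t x) = (1 - t)\<^sup>2"
      using x coord_sqnorm_scale[of p "1 - t" x] by (simp add: m_def coord_sphere_def)
    also have "\<dots> \<le> 1" using t by (simp add: power_le_one)
    finally show ?thesis using x by (auto simp: coord_ball_def coord_sphere_def m_def)
  qed
  have "homotopic_with (\<lambda>_. True) (nsphere p) (nsphere p)
          (\<lambda>x. coord_normalize p (\<lambda>i. m 0 x i - f (m 0 x) i))
          (\<lambda>x. coord_normalize p (\<lambda>i. m 1 x i - f (m 1 x) i))"
  proof (rule normalized_homotopy)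
    have cm: "continuous_on ({0..1} \<times> coord_sphere p) (\<lambda>z. m (fst z) (snd z))"
      unfolding m_def
      by (intro continuous_on_coordinatewise_then_product continuous_intros
            continuous_on_compose2[OF continuous_on_product_coordinates continuous_on_snd]) auto
    fix i
    have "continuous_on ({0..1} \<times> coord_sphere p) (\<lambda>z. f (m (fst z) (snd z)) i)"
      using m_ball by (intro continuous_on_coordinate_compose[OF cf cm]) auto
    moreover have "continuous_on ({0..1} \<times> coord_sphere p) (\<lambda>z. m (fst z) (snd z) i)"
      by (rule continuous_on_compose2[OF continuous_on_product_coordinates cm]) auto
    ultimately show "continuous_on ({0..1} \<times> coord_sphere p)
                       (\<lambda>z. m (fst z) (snd z) i - f (m (fst z) (snd z)) i)"
      by (intro continuous_intros)
  next
    fix t :: real and x assume "t \<in> {0..1}" "x \<in> coord_sphere p"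
    then have mB: "m t x \<in> coord_ball p" by (rule m_ball)
    show "coord_sqnorm p (\<lambda>i. m t x i - f (m t x) i) \<noteq> 0"
    proof
      assume "coord_sqnorm p (\<lambda>i. m t x i - f (m t x) i) = 0"
      then have "m t x = f (m t x)"
        using f_ball[OF mB] mB by (intro coord_eq_if_sqnorm_diff_0) (auto simp: coord_ball_def)
      then show False using no_fixpoint[OF mB] by simp
    qed
  next
    fix t :: real and x i assume "t \<in> {0..1}" "x \<in> coord_sphere p" "p < i"
    then show "m t x i - f (m t x) i = 0"
      using m_ball f_ball by (auto simp: coord_ball_def)
  qed
  then show ?thesis by (simp add: m_def)
qed

text \<open>Brouwer's fixed point theorem for the closed unit ball of the coordinate space
  \<open>\<real>\<^sup>p\<^sup>+\<^sup>1 \<subseteq> (nat \<Rightarrow> real)\<close>: by the two previous lemmas a fixed-point-free self-map would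
  make the sphere contractible.\<close>
theorem brouwer_coord_ball:
  assumes "continuous_on (coord_ball p) f" "\<And>x. x \<in> coord_ball p \<Longrightarrow> f x \<in> coord_ball p"
  shows "\<exists>x\<in>coord_ball p. f x = x"
proof (rule ccontr)
  assume "\<not> ?thesis"
  then have "\<And>x. x \<in> coord_ball p \<Longrightarrow> f x \<noteq> x" by blast
  then have "contractible_space (nsphere p)"
    unfolding contractible_space_def
    using homotopic_with_trans[OF fixpoint_free_homotopic_id fixpoint_free_homotopic_const] assms
    by blast
  then show False using non_contractible_space_nsphere by blast
qed

lemma continuous_on_coordinate [continuous_intros]:
  "continuous_on A (\<lambda>x::nat \<Rightarrow> real. x i)"
  by (rule continuous_on_subset[OF continuous_on_product_coordinates]) auto

lemma std_simplex_le_1: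
  assumes "l \<in> std_simplex n" "i < n" shows "l i \<le> 1"
  using assms member_le_sum[of i "{..<n}" l] by (auto simp: std_simplex_def)

text \<open>\<open>\<Delta>\<^sub>n\<^sub>-\<^sub>1\<close> lies in the unit ball of \<open>\<real>\<^sup>n\<close>, since \<open>\<Sum> l\<^sub>i\<^sup>2 \<le> \<Sum> l\<^sub>i = 1\<close>.\<close>
lemma std_simplex_subset_coord_ball:
  assumes "n \<ge> 1" "l \<in> std_simplex n" shows "l \<in> coord_ball (n - 1)"
proof -
  have "{..n - 1} = {..<n}" using assms(1) by auto
  moreover have "(\<Sum>i<n. (l i)\<^sup>2) \<le> (\<Sum>i<n. l i)"
  proof (rule sum_mono)
    fix i assume "i \<in> {..<n}"
    then have "0 \<le> l i" "l i \<le> 1"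
      using assms(2) std_simplex_le_1 by (auto simp: std_simplex_def)
    then show "(l i)\<^sup>2 \<le> l i" by (simp add: power2_eq_square mult_left_le)
  qed
  ultimately show ?thesis using assms by (auto simp: coord_ball_def coord_sqnorm_def std_simplex_def)
qed

text \<open>A continuous retraction of the whole coordinate space onto the standard simplex:
  take positive parts, add the deficit \<open>e\<close> to every coordinate and renormalise.\<close>
definition simplex_retraction :: "nat \<Rightarrow> (nat \<Rightarrow> real) \<Rightarrow> nat \<Rightarrow> real" where
  "simplex_retraction n x =
     (let s = (\<Sum>i<n. max (x i) 0); e = max 0 (1 - s)
      in (\<lambda>i. if i < n then (max (x i) 0 + e) / (s + real n * e) else 0))"

lemma simplex_retraction_denominator:
  assumes "n \<ge> 1"
  shows "1 \<le> (\<Sum>i<n. max (x i) 0) + real n * max 0 (1 - (\<Sum>i<n. max (x i) 0))"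
proof -
  have "0 \<le> (\<Sum>i<n. max (x i) 0)" by (rule sum_nonneg) auto
  moreover have "1 \<le> real n" using assms by auto
  ultimately show ?thesis
    using mult_right_mono[OF \<open>1 \<le> real n\<close>, of "max 0 (1 - (\<Sum>i<n. max (x i) 0))"]
    by (auto simp: max_def split: if_splits)
qed

lemma simplex_retraction_in:
  assumes "n \<ge> 1" shows "simplex_retraction n x \<in> std_simplex n"
proof -
  define s where "s = (\<Sum>i<n. max (x i) 0)"
  define e where "e = max 0 (1 - s)"
  have d: "1 \<le> s + real n * e"
    using simplex_retraction_denominator[OF assms, of x] by (simp add: s_def e_def)
  have "(\<Sum>i<n. (max (x i) 0 + e) / (s + real n * e)) = (\<Sum>i<n. max (x i) 0 + e) / (s + real n * e)"
    by (simp add: sum_divide_distrib)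
  also have "(\<Sum>i<n. max (x i) 0 + e) = s + real n * e" by (simp add: s_def sum.distrib)
  finally have "(\<Sum>i<n. (max (x i) 0 + e) / (s + real n * e)) = 1" using d by simp
  moreover have "0 \<le> (max (x i) 0 + e) / (s + real n * e)" for i
    using d by (simp add: e_def)
  ultimately show ?thesis
    unfolding std_simplex_def simplex_retraction_def Let_def s_def[symmetric] e_def[symmetric]
    by auto
qed

lemma simplex_retraction_id:
  assumes "l \<in> std_simplex n" shows "simplex_retraction n l = l"
proof
  have "(\<Sum>i<n. max (l i) 0) = 1" using assms by (simp add: std_simplex_def)
  then show "simplex_retraction n l i = l i" for i
    using assms unfolding simplex_retraction_def Let_def by (auto simp: std_simplex_def)
qed

lemma continuous_on_simplex_retraction:
  assumes "n \<ge> 1" shows "continuous_on A (simplex_retraction n)"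
proof (rule continuous_on_coordinatewise_then_product)
  fix i
  have "(\<Sum>i<n. max (x i) 0) + real n * max 0 (1 - (\<Sum>i<n. max (x i) 0)) \<noteq> 0" for x
    using simplex_retraction_denominator[OF assms, of x] by linarith
  then show "continuous_on A (\<lambda>x. simplex_retraction n x i)"
    unfolding simplex_retraction_def Let_def by (cases "i < n") (auto intro!: continuous_intros)
qed

text \<open>Brouwer's fixed point theorem for the standard simplex, a retract of the unit ball.\<close>
theorem brouwer_std_simplex:
  assumes n: "n \<ge> 1" and cg: "continuous_on (std_simplex n) g"
    and g_simplex: "\<And>l. l \<in> std_simplex n \<Longrightarrow> g l \<in> std_simplex n"
  shows "\<exists>l\<in>std_simplex n. g l = l"
proof -
  obtain l where "l \<in> std_simplex n" "g l = l"
  proof (rule invertible_fixpoint_property[of "std_simplex n" id "coord_ball (n - 1)"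
        "simplex_retraction n" g])
    show "id \<in> std_simplex n \<rightarrow> coord_ball (n - 1)"
      using std_simplex_subset_coord_ball[OF n] by auto
    show "simplex_retraction n \<in> coord_ball (n - 1) \<rightarrow> std_simplex n"
      using simplex_retraction_in[OF n] by auto
    show "\<exists>x\<in>coord_ball (n - 1). f x = x"
      if "continuous_on (coord_ball (n - 1)) f" "f \<in> coord_ball (n - 1) \<rightarrow> coord_ball (n - 1)" for f
      using brouwer_coord_ball that by blast
  qed (use cg g_simplex continuous_on_simplex_retraction[OF n] simplex_retraction_id in auto)
  then show ?thesis by blast
qed

text \<open>The standard simplex is compact: a closed subset of a product of compact intervals.\<close>
lemma compact_std_simplex: "compact (std_simplex n)"
proof -
  define B where "B = (\<lambda>i::nat. if i < n then {0..1::real} else {0})"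
  have "compactin (product_topology (\<lambda>i. euclidean) UNIV) (PiE UNIV B)"
    by (subst compactin_PiE) (auto simp: B_def)
  then have box: "compact (PiE UNIV B)" by (simp add: euclidean_product_topology)
  have hyperplane: "closed {l::nat \<Rightarrow> real. (\<Sum>i<n. l i) = 1}"
    by (rule closed_Collect_eq) (intro continuous_intros)+
  have "std_simplex n = {l. (\<Sum>i<n. l i) = 1} \<inter> PiE UNIV B"
  proof (intro subset_antisym subsetI)
    fix l assume "l \<in> std_simplex n"
    then show "l \<in> {l. (\<Sum>i<n. l i) = 1} \<inter> PiE UNIV B"
      using std_simplex_le_1 by (auto simp: std_simplex_def B_def PiE_def Pi_def)
  next
    fix l assume l: "l \<in> {l. (\<Sum>i<n. l i) = 1} \<inter> PiE UNIV B"
    then have "l i \<in> B i" for i by auto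
    then have "0 \<le> l i" "n \<le> i \<Longrightarrow> l i = 0" for i
      by (metis B_def atLeastAtMost_iff order.refl not_le singletonD)+
    then show "l \<in> std_simplex n" using l by (simp add: std_simplex_def)
  qed
  then show ?thesis using closed_Int_compact[OF hyperplane box] by simp
qed

lemma tvs_continuous_add:
  fixes f g :: "'b::topological_space \<Rightarrow> 'a::{real_vector,topological_space}"
  assumes "tvs TYPE('a)" "continuous_on A f" "continuous_on A g"
  shows "continuous_on A (\<lambda>z. f z + g z)"
proof -
  have "continuous_on UNIV (\<lambda>p::'a \<times> 'a. fst p + snd p)" using assms(1) by (simp add: tvs_def)
  from continuous_on_compose2[OF this continuous_on_Pair[OF assms(2,3)]] show ?thesis by simp
qed

lemma tvs_continuous_scale:
  fixes c :: "'b::topological_space \<Rightarrow> real" and v :: "'b \<Rightarrow> 'a::{real_vector,topological_space}"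
  assumes "tvs TYPE('a)" "continuous_on A c" "continuous_on A v"
  shows "continuous_on A (\<lambda>z. c z *\<^sub>R v z)"
proof -
  have "continuous_on UNIV (\<lambda>p::real \<times> 'a. fst p *\<^sub>R snd p)" using assms(1) by (simp add: tvs_def)
  from continuous_on_compose2[OF this continuous_on_Pair[OF assms(2,3)]] show ?thesis by simp
qed

lemma tvs_continuous_lincomb:
  fixes v :: "nat \<Rightarrow> 'a::{real_vector,topological_space}"
  assumes "tvs TYPE('a)" "\<And>i. continuous_on A (c i)"
  shows "continuous_on A (\<lambda>z. \<Sum>i<n. c i z *\<^sub>R v i)"
proof (induction n)
  case (Suc n)
  then show ?case unfolding sum.lessThan_Suc
    by (intro tvs_continuous_add tvs_continuous_scale assms continuous_on_const)
qed simp

lemma tvs_continuous_diff: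
  assumes "tvs TYPE('a::{real_vector,topological_space})"
  shows "continuous_on UNIV (\<lambda>q::'a \<times> 'a. fst q - snd q)"
proof -
  have "continuous_on UNIV (\<lambda>q::'a \<times> 'a. fst q + (-1) *\<^sub>R snd q)"
    by (intro tvs_continuous_add tvs_continuous_scale assms continuous_on_fst continuous_on_snd
        continuous_on_id continuous_on_const)
  then show ?thesis by simp
qed

definition barycentric :: "nat \<Rightarrow> (nat \<Rightarrow> 'a::real_vector) \<Rightarrow> (nat \<Rightarrow> real) \<Rightarrow> 'a" where
  "barycentric n x l = (\<Sum>i<n. l i *\<^sub>R x i)"

lemma convex_hull_barycentric:
  assumes "finite S" "S \<noteq> {}"
  obtains n x where "n \<ge> 1" "bij_betw x {..<n} S"
    and "convex hull S = barycentric n x ` std_simplex n"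
proof -
  define n where "n = card S"
  have n: "n \<ge> 1" using assms by (simp add: n_def Suc_le_eq card_gt_0_iff)
  obtain x where x: "bij_betw x {..<n} S"
    using ex_bij_betw_nat_finite[OF assms(1)] by (auto simp: n_def atLeast0LessThan)
  have "barycentric n x l \<in> convex hull S" if "l \<in> std_simplex n" for l
    unfolding barycentric_def using that x
    by (intro convex_sum) (auto simp: std_simplex_def bij_betw_def intro: hull_inc)
  moreover have "z \<in> barycentric n x ` std_simplex n" if z: "z \<in> convex hull S" for z
  proof -
    obtain u where u: "\<forall>y\<in>S. 0 \<le> u y" "sum u S = 1" "(\<Sum>y\<in>S. u y *\<^sub>R y) = z"
      using z convex_hull_finite[OF assms(1)] by auto
    define l where "l = (\<lambda>i. if i < n then u (x i) else 0)"
    have "(\<Sum>i<n. l i) = sum u S"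
      using sum.reindex_bij_betw[OF x, of u] by (simp add: l_def)
    then have "l \<in> std_simplex n"
      using u x by (auto simp: std_simplex_def l_def bij_betw_def)
    moreover have "barycentric n x l = z"
      using sum.reindex_bij_betw[OF x, of "\<lambda>y. u y *\<^sub>R y"] u by (simp add: l_def barycentric_def)
    ultimately show ?thesis by blast
  qed
  ultimately show ?thesis using n x that by blast
qed

text \<open>In a topological vector space the convex hull of a finite set is compact, being a
  continuous image of a standard simplex.\<close>
lemma tvs_compact_convex_hull:
  assumes "tvs TYPE('a::{real_vector,topological_space})" "finite (S :: 'a set)"
  shows "compact (convex hull S)"
proof (cases "S = {}")
  case False
  then obtain n x where hull: "convex hull S = barycentric n x ` std_simplex n"
    using convex_hull_barycentric[OF assms(2) False] by metis
  have "continuous_on (std_simplex n) (barycentric n x)"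
    unfolding barycentric_def by (intro tvs_continuous_lincomb assms(1) continuous_intros)
  from compact_continuous_image[OF this compact_std_simplex] show ?thesis by (simp only: hull)
qed simp

definition simplex_mix :: "nat \<Rightarrow> (nat \<Rightarrow> real) \<Rightarrow> (nat \<Rightarrow> nat \<Rightarrow> real) \<Rightarrow> nat \<Rightarrow> real" where
  "simplex_mix n c \<mu> = (\<lambda>j. if j < n then \<Sum>i<n. c i * \<mu> i j else 0)"

lemma simplex_mix_in:
  assumes "c \<in> std_simplex n" "\<And>i. i < n \<Longrightarrow> \<mu> i \<in> std_simplex n"
  shows "simplex_mix n c \<mu> \<in> std_simplex n"
proof -
  have "(\<Sum>j<n. \<Sum>i<n. c i * \<mu> i j) = (\<Sum>i<n. c i * (\<Sum>j<n. \<mu> i j))"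
    by (subst sum.swap) (simp add: sum_distrib_left)
  also have "\<dots> = 1" using assms by (simp add: std_simplex_def)
  finally show ?thesis
    using assms by (auto simp: simplex_mix_def std_simplex_def intro!: sum_nonneg)
qed

lemma continuous_on_simplex_mix:
  assumes "\<And>i. i < n \<Longrightarrow> continuous_on A (\<lambda>l. c l i)"
  shows "continuous_on A (\<lambda>l. simplex_mix n (c l) \<mu>)"
proof (rule continuous_on_coordinatewise_then_product)
  fix j
  have "continuous_on A (\<lambda>l. \<Sum>i<n. c l i * \<mu> i j)"
    using assms by (intro continuous_on_sum continuous_on_mult_right) auto
  then show "continuous_on A (\<lambda>l. simplex_mix n (c l) \<mu> j)"
    by (cases "j < n") (simp_all add: simplex_mix_def)
qed

lemma continuous_on_reparametrized_coordinate:
  assumes "continuous_on {0..1} h" "i < n"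
  shows "continuous_on (std_simplex n) (\<lambda>l. h (l i))"
proof (rule continuous_on_compose2[OF assms(1) continuous_on_coordinate])
  show "(\<lambda>l. l i) ` std_simplex n \<subseteq> {0..1}"
    using std_simplex_le_1 assms(2) by (auto simp: std_simplex_def)
qed

lemma barycentric_simplex_mix:
  "barycentric n x (simplex_mix n c \<mu>) = (\<Sum>i<n. c i *\<^sub>R barycentric n x (\<mu> i))"
proof -
  have "barycentric n x (simplex_mix n c \<mu>) = (\<Sum>j<n. \<Sum>i<n. c i *\<^sub>R (\<mu> i j *\<^sub>R x j))"
    by (simp add: barycentric_def simplex_mix_def scaleR_sum_left)
  also have "\<dots> = (\<Sum>i<n. c i *\<^sub>R barycentric n x (\<mu> i))"
    by (subst sum.swap) (simp add: barycentric_def scaleR_sum_right)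
  finally show ?thesis .
qed

text \<open>Choosing barycentric coordinates \<open>\<mu> i\<close> of the points \<open>y i \<in> U (x i)\<close>, the map
  \<open>l \<mapsto> simplex_mix (g(l)) \<mu>\<close> is a continuous self-map of \<open>\<Delta>\<^sub>n\<^sub>-\<^sub>1\<close>; at a Brouwer fixed
  point \<open>l\<close> the point \<open>z = \<Sum> l\<^sub>i x\<^sub>i\<close> satisfies \<open>z = \<Sum> g\<^sub>i(l\<^sub>i) y\<^sub>i \<in> U z\<close>.\<close>
theorem wnq_fixed_point:
  assumes "finite S" "K = convex hull S" "K \<noteq> {}"
    and U_K: "\<forall>z\<in>K. U z \<subseteq> K" and "wnq K K U"
  shows "\<exists>z\<in>K. z \<in> U z"
proof -
  obtain n x where n: "n \<ge> 1" and x: "bij_betw x {..<n} S"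
    and K: "K = barycentric n x ` std_simplex n"
    using convex_hull_barycentric assms(1-3) by (metis convex_hull_empty)
  have xK: "x i \<in> K" if "i < n" for i
    using x that assms(2) by (auto simp: bij_betw_def intro: hull_inc)
  moreover have "inj_on x {..<n}" using x by (simp add: bij_betw_def)
  ultimately obtain y g where
      y: "\<forall>i<n. y i \<in> U (x i)" and
      g: "\<forall>i<n. continuous_on {0..1} (g i) \<and> g i 0 = 0 \<and> g i 1 = 1 \<and> g i ` {0..1} \<subseteq> {0..1}" and
      g_bij: "bij_betw (\<lambda>l i. if i < n then g i (l i) else 0) (std_simplex n) (std_simplex n)" and
      g_U: "\<forall>l\<in>std_simplex n. (\<Sum>i<n. g i (l i) *\<^sub>R y i) \<in> U (\<Sum>i<n. l i *\<^sub>R x i)"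
    using assms(5) n unfolding wnq_def by blast
  have "\<forall>i<n. \<exists>m\<in>std_simplex n. y i = barycentric n x m"
    using y U_K K xK by blast
  then obtain \<mu> where \<mu>: "\<And>i. i < n \<Longrightarrow> \<mu> i \<in> std_simplex n \<and> y i = barycentric n x (\<mu> i)"
    by metis
  define c where "c = (\<lambda>l i. if i < n then g i (l i) else 0)"
  define G where "G = (\<lambda>l. simplex_mix n (c l) \<mu>)"
  have "continuous_on (std_simplex n) G"
    unfolding G_def c_def using g
    by (intro continuous_on_simplex_mix) (simp add: continuous_on_reparametrized_coordinate)
  moreover have "G l \<in> std_simplex n" if "l \<in> std_simplex n" for l
  proof -
    have "c l \<in> std_simplex n" using g_bij that by (auto simp: bij_betw_def c_def)
    then show ?thesis unfolding G_def using \<mu> by (intro simplex_mix_in) auto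
  qed
  ultimately obtain l where l: "l \<in> std_simplex n" "G l = l"
    using brouwer_std_simplex[OF n] by blast
  have fixed: "barycentric n x l = (\<Sum>i<n. g i (l i) *\<^sub>R y i)"
    using barycentric_simplex_mix[of n x "c l" \<mu>] l(2) \<mu> by (simp add: G_def c_def)
  have "(\<Sum>i<n. g i (l i) *\<^sub>R y i) \<in> U (barycentric n x l)"
    using g_U l(1) by (simp add: barycentric_def)
  then have "barycentric n x l \<in> U (barycentric n x l)"
    by (simp only: fixed[symmetric])
  then show ?thesis using K l(1) by blast
qed

text \<open>If \<open>(x, x)\<close> lies outside the closure of the graph of \<open>T\<close>, then near \<open>x\<close> no point \<open>z\<close>
  is, up to a small translation \<open>v\<close>, a value of \<open>T z\<close>: continuity of subtraction turns a
  product neighbourhood of \<open>(x, x)\<close> into neighbourhoods of \<open>x\<close> and of the origin.\<close>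
lemma outside_closure_corr_nbhd:
  fixes T :: "'a::{real_vector,topological_space} \<Rightarrow> 'a set"
  assumes tvs: "tvs TYPE('a)" and T_K: "\<forall>z\<in>K. T z \<subseteq> K"
    and x: "x \<in> K" "x \<notin> closure_corr K K T x"
  shows "\<exists>A Q. open A \<and> x \<in> A \<and> open Q \<and> 0 \<in> Q \<and>
           (\<forall>z\<in>A. \<forall>v\<in>Q. z \<in> K \<longrightarrow> z - v \<notin> T z)"
proof -
  define Gr where "Gr = corr_graph T \<inter> (K \<times> K)"
  have "(x, x) \<in> - closure Gr" using x by (auto simp: closure_corr_def Gr_def)
  then obtain A B where AB: "open A" "open B" "(x, x) \<in> A \<times> B" "A \<times> B \<subseteq> - closure Gr"
    by (rule open_prod_elim[OF open_Compl[OF closed_closure]])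
  let ?diff = "\<lambda>q::'a \<times> 'a. fst q - snd q"
  have "open (?diff -` B)" by (rule open_vimage[OF AB(2) tvs_continuous_diff[OF tvs]])
  moreover have "(x, 0) \<in> ?diff -` B" using AB by auto
  ultimately obtain P Q where PQ: "open P" "open Q" "(x, 0) \<in> P \<times> Q" "P \<times> Q \<subseteq> ?diff -` B"
    by (rule open_prod_elim)
  show ?thesis
  proof (intro exI conjI ballI impI)
    show "open (A \<inter> P)" "x \<in> A \<inter> P" "open Q" "0 \<in> Q" using AB PQ by auto
    fix z v assume zv: "z \<in> A \<inter> P" "v \<in> Q" "z \<in> K"
    then have "(z, z - v) \<in> A \<times> B" using PQ(4) by auto
    then have "(z, z - v) \<in> - closure Gr" using AB(4) by (rule rev_subsetD)
    then have "(z, z - v) \<notin> Gr" using closure_subset[of Gr] by (meson ComplD subsetD)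
    then show "z - v \<notin> T z" using zv T_K by (auto simp: Gr_def corr_graph_def)
  qed
qed

text \<open>Otherwise finitely many of the neighbourhoods of the previous lemma cover \<open>K\<close>,
  and the intersection of the corresponding neighbourhoods of the origin admits no
  approximate fixed point.\<close>
lemma closure_fixed_point_from_approximate:
  fixes T :: "'a::{real_vector,topological_space} \<Rightarrow> 'a set"
  assumes tvs: "tvs TYPE('a)" and "compact K" and T_K: "\<forall>z\<in>K. T z \<subseteq> K"
    and approx: "\<And>V. open V \<Longrightarrow> 0 \<in> V \<Longrightarrow> \<exists>z\<in>K. z \<in> corr_V K T V z"
  shows "\<exists>x\<in>K. x \<in> closure_corr K K T x"
proof (rule ccontr)
  assume no_fixpoint: "\<not> ?thesis"
  have "\<exists>A Q. open A \<and> x \<in> A \<and> open Q \<and> 0 \<in> Q \<and> (\<forall>z\<in>A. \<forall>v\<in>Q. z \<in> K \<longrightarrow> z - v \<notin> T z)"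
    if x: "x \<in> K" for x
  proof (rule outside_closure_corr_nbhd[OF tvs T_K x])
    show "x \<notin> closure_corr K K T x" using no_fixpoint x by blast
  qed
  then obtain A Q where AQ: "\<And>x. x \<in> K \<Longrightarrow> open (A x) \<and> x \<in> A x \<and> open (Q x) \<and> 0 \<in> Q x \<and>
      (\<forall>z\<in>A x. \<forall>v\<in>Q x. z \<in> K \<longrightarrow> z - v \<notin> T z)"
    by metis
  obtain F where F: "F \<subseteq> K" "finite F" "K \<subseteq> (\<Union>c\<in>F. A c)"
    using compactE_image[OF \<open>compact K\<close>, of K A] AQ by blast
  have "open (\<Inter>c\<in>F. Q c)" "0 \<in> (\<Inter>c\<in>F. Q c)" using F AQ by auto
  then obtain z where "z \<in> K" "z \<in> corr_V K T (\<Inter>c\<in>F. Q c) z"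
    using approx by blast
  then obtain y v where zyv: "z \<in> K" "y \<in> T z" "v \<in> (\<Inter>c\<in>F. Q c)" "z = y + v"
    unfolding corr_V_def by blast
  then obtain c where "c \<in> F" "z \<in> A c" using F by auto
  then have "z - v \<notin> T z" using AQ F zyv by blast
  then show False using zyv by simp
qed

text \<open>Each \<open>T\<^sub>V\<close> has a fixed point by
  \<open>wnq_fixed_point\<close>, and the simplex is compact.\<close>
theorem theorem7:
  fixes K :: "'a::{real_vector,topological_space} set"
    and T :: "'a \<Rightarrow> 'a set"
  assumes "tvs TYPE('a)"
    and "is_simplex K" and "K \<noteq> {}"
    and "\<forall>x\<in>K. T x \<subseteq> K"
    and "star_wnq K K T"
  shows "\<exists>xs\<in>K. xs \<in> closure_corr K K T xs"
proof -
  obtain S where S: "finite S" "K = convex hull S"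
    using assms(2) unfolding is_simplex_def by blast
  have "\<exists>z\<in>K. z \<in> corr_V K T V z" if "open V" "0 \<in> V" for V
  proof (rule wnq_fixed_point[OF S assms(3)])
    show "wnq K K (corr_V K T V)" using assms(5) that unfolding star_wnq_def by blast
  qed (simp add: corr_V_def)
  moreover have "compact K" using S tvs_compact_convex_hull[OF assms(1)] by simp
  ultimately show ?thesis using closure_fixed_point_from_approximate assms(1,4) by blast
qed

end
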